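(* Let $Q\subset\mathbb{C}$ be an unshielded continuum and $m:Q\to Y$ a monotone surjective map such that $m(\mathrm{imp}(\alpha))$ is a point for every angle $\alpha$. Then $Y$ is locally connected, and the map $\Phi_m:S^1\to Y$, $\Phi_m(\alpha)=m(\mathrm{imp}(\alpha))$, is a well-defined continuous surjection.
   Context: $Q$ is unshielded if $Q=\partial U_\infty$, $U_\infty$ the component of $\widehat{\mathbb{C}}\setminus Q$ containing $\infty$. Let $\Psi:\widehat{\mathbb{C}}\setminus\overline{\mathbb{D}}\to U_\infty$ be the Riemann map with $\Psi(\infty)=\infty$, $\Psi'(\infty)>0$; angles $\alpha\in S^1=\mathbb{R}/\mathbb{Z}$. The impression $\mathrm{imp}(\alpha)$ is the set of all limits $\lim\Psi(z_i)$ with $|z_i|>1$, $z_i\to e^{2\pi i\alpha}$. Monotone: continuous with connected fibers. *)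

theory Defs
  imports "HOL-Analysis.Analysis"
begin

definition continuum :: "complex set \<Rightarrow> bool" where
  "continuum Q \<longleftrightarrow> Q \<noteq> {} \<and> compact Q \<and> connected Q"

text \<open>Unshielded: Q is the boundary of the unbounded complementary component
  (the library's "outside Q" is the union of the unbounded components of the
  complement; for compact Q in the plane this is the single component U_infinity
  with the point at infinity removed).\<close>
definition unshielded :: "complex set \<Rightarrow> bool" where
  "unshielded Q \<longleftrightarrow> Q = frontier (outside Q)"

text \<open>Psi is the Riemann map from the exterior of the closed unit disc onto
  U_infinity, normalised by Psi(infinity) = infinity and Psi'(infinity) > 0,
  i.e. Psi(z)/z tends to a positive real number as z tends to infinity.\<close>
definition exterior_riemann_map :: "complex set \<Rightarrow> (complex \<Rightarrow> complex) \<Rightarrow> bool" where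
  "exterior_riemann_map Q \<Psi> \<longleftrightarrow>
     \<Psi> holomorphic_on {z. 1 < norm z} \<and>
     bij_betw \<Psi> {z. 1 < norm z} (outside Q) \<and>
     (\<exists>c::real. 0 < c \<and> ((\<lambda>z. \<Psi> z / z) \<longlongrightarrow> complex_of_real c) at_infinity)"

text \<open>Impression of the angle whose point on the unit circle is w
  (w = exp(2 pi i alpha)).\<close>
definition impression :: "(complex \<Rightarrow> complex) \<Rightarrow> complex \<Rightarrow> complex set" where
  "impression \<Psi> w = {L. \<exists>z::nat \<Rightarrow> complex. (\<forall>i. 1 < norm (z i)) \<and>
      z \<longlonglongrightarrow> w \<and> (\<lambda>i. \<Psi> (z i)) \<longlonglongrightarrow> L}"

definition monotone_map :: "complex set \<Rightarrow> (complex \<Rightarrow> 'b::topological_space) \<Rightarrow> bool" where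
  "monotone_map Q m \<longleftrightarrow> continuous_on Q m \<and> (\<forall>y. connected {x\<in>Q. m x = y})"

end

theory Submission
  imports Defs "HOL-Complex_Analysis.Complex_Analysis"
begin

text \<open>Every point of Q is a limit of points of the unbounded complementary component; pulling
  such a sequence back by the Riemann map, its preimages stay bounded (Psi grows linearly at
  infinity) and cannot accumulate in the open exterior of the disc (Q is disjoint from
  U_infinity), so they accumulate on the circle: Q is the union of the impressions. Conversely,
  the open mapping theorem shows that impressions avoid U_infinity, so they lie in Q. A
  diagonal argument shows that impressions vary upper semicontinuously with the angle, hence
  Phi_m is continuous; it is onto Y, and Y, as a Hausdorff quotient of the compact locally
  connected circle, is locally connected.\<close>

lemma Hausdorff_space_euclidean_t2: "Hausdorff_space (euclidean :: 'a::t2_space topology)"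
  unfolding Hausdorff_space_def disjnt_def by (simp add: separation_t2)

lemma locally_connected_space_continuous_image:
  fixes f :: "'a::t2_space \<Rightarrow> 'b::t2_space"
  assumes "compact S" and "locally connected S"
    and "continuous_on S f" and "f ` S = UNIV"
  shows "locally_connected_space (euclidean :: 'b topology)"
proof (rule locally_connected_space_quotient_map_image)
  show "locally_connected_space (top_of_set S)"
    unfolding locally_connected_space
    using \<open>locally connected S\<close> unfolding locally_connected
    by (metis connectedin_iff_connected connectedin_subtopology openin_subset
        topspace_euclidean_subtopology)
  show "quotient_map (top_of_set S) euclidean f"
    by (rule continuous_imp_quotient_map)
       (use assms Hausdorff_space_euclidean_t2 in \<open>auto simp: compact_space_subtopology\<close>)
qed

lemma impression_limit:
  assumes y: "\<And>n. y n \<in> impression \<Psi> (v n)"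
    and v: "v \<longlonglongrightarrow> w" and yL: "y \<longlonglongrightarrow> L"
  shows "L \<in> impression \<Psi> w"
proof -
  have "\<exists>\<zeta>. 1 < norm \<zeta> \<and> dist \<zeta> (v n) < inverse (real (Suc n))
          \<and> dist (\<Psi> \<zeta>) (y n) < inverse (real (Suc n))" for n
  proof -
    obtain s where s: "\<forall>i. 1 < norm (s i)" "s \<longlonglongrightarrow> v n" "(\<lambda>i. \<Psi> (s i)) \<longlonglongrightarrow> y n"
      using y unfolding impression_def by blast
    have e: "0 < inverse (real (Suc n))" by simp
    obtain i where "dist (s i) (v n) < inverse (real (Suc n))"
      "dist (\<Psi> (s i)) (y n) < inverse (real (Suc n))"
      using eventually_happens'[OF sequentially_bot
          eventually_conj[OF tendstoD[OF s(2) e] tendstoD[OF s(3) e]]] by blast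
    then show ?thesis using s(1) by blast
  qed
  then obtain z where z: "\<And>n. 1 < norm (z n)"
    "\<And>n. dist (z n) (v n) < inverse (real (Suc n))"
    "\<And>n. dist (\<Psi> (z n)) (y n) < inverse (real (Suc n))"
    by metis
  have "z \<longlonglongrightarrow> w"
  proof (rule Lim_transform[OF v])
    show "(\<lambda>n. z n - v n) \<longlonglongrightarrow> 0"
      by (rule Lim_null_comparison[OF _ LIMSEQ_inverse_real_of_nat])
         (use z(2) in \<open>auto simp: dist_norm less_imp_le\<close>)
  qed
  moreover have "(\<lambda>n. \<Psi> (z n)) \<longlonglongrightarrow> L"
  proof (rule Lim_transform[OF yL])
    show "(\<lambda>n. \<Psi> (z n) - y n) \<longlonglongrightarrow> 0"
      by (rule Lim_null_comparison[OF _ LIMSEQ_inverse_real_of_nat])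
         (use z(3) in \<open>auto simp: dist_norm less_imp_le\<close>)
  qed
  ultimately show ?thesis using z(1) unfolding impression_def by blast
qed

lemma impression_subset_closure_image:
  "impression \<Psi> w \<subseteq> closure (\<Psi> ` {z. 1 < norm z})"
proof
  fix L assume "L \<in> impression \<Psi> w"
  then obtain z where "\<forall>i. 1 < norm (z i)" "(\<lambda>i. \<Psi> (z i)) \<longlonglongrightarrow> L"
    unfolding impression_def by blast
  then show "L \<in> closure (\<Psi> ` {z. 1 < norm z})"
    unfolding closure_sequential by (intro exI[of _ "\<lambda>i. \<Psi> (z i)"]) auto
qed

lemma continuous_on_inv_into_holomorphic_injective:
  assumes "f holomorphic_on S" and "open S" and "inj_on f S"
  shows "continuous_on (f ` S) (inv_into S f)"
proof (rule continuous_on_inverse_open_map)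
  show "continuous_on S f"
    using assms(1) by (rule holomorphic_on_imp_continuous_on)
  show "openin (top_of_set (f ` S)) (f ` U)" if "openin (top_of_set S) U" for U
  proof -
    have "open U" "U \<subseteq> S"
      using that openin_open_eq[OF \<open>open S\<close>] by auto
    then have "open (f ` U)"
      using assms by (meson holomorphic_on_subset inj_on_subset open_mapping_thm3)
    then show ?thesis
      using \<open>U \<subseteq> S\<close> by (auto simp: openin_open intro!: exI[of _ "f ` U"])
  qed
qed (use assms(3) in auto)

lemma impression_disjoint_image:
  assumes holo: "\<Psi> holomorphic_on {z. 1 < norm z}" and inj: "inj_on \<Psi> {z. 1 < norm z}"
    and w: "norm w = 1"
  shows "impression \<Psi> w \<inter> \<Psi> ` {z. 1 < norm z} = {}"
proof (rule ccontr)
  define E where "E = {z::complex. 1 < norm z}"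
  assume "impression \<Psi> w \<inter> \<Psi> ` {z. 1 < norm z} \<noteq> {}"
  then obtain z z0 where z: "\<forall>i. z i \<in> E" "z \<longlonglongrightarrow> w" "(\<lambda>i. \<Psi> (z i)) \<longlonglongrightarrow> \<Psi> z0"
    and z0: "z0 \<in> E"
    unfolding impression_def E_def by auto
  have "open E"
    unfolding E_def by (intro open_Collect_less continuous_intros)
  then have "continuous_on (\<Psi> ` E) (inv_into E \<Psi>)"
    using continuous_on_inv_into_holomorphic_injective holo inj unfolding E_def by blast
  then have "(\<lambda>i. inv_into E \<Psi> (\<Psi> (z i))) \<longlonglongrightarrow> inv_into E \<Psi> (\<Psi> z0)"
    by (rule continuous_on_tendsto_compose[OF _ z(3)]) (use z(1) z0 in auto)
  then have "z \<longlonglongrightarrow> z0"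
    using inj z(1) z0 unfolding E_def by simp
  then have "w = z0"
    using z(2) LIMSEQ_unique by blast
  then show False
    using w z0 unfolding E_def by simp
qed

lemma norm_ge_linear_at_infinity:
  fixes f :: "'a::real_normed_field \<Rightarrow> 'a"
  assumes "((\<lambda>z. f z / z) \<longlongrightarrow> c) at_infinity" and "c \<noteq> 0"
  obtains R where "\<And>z. R \<le> norm z \<Longrightarrow> norm c / 2 * norm z \<le> norm (f z)"
proof -
  have "eventually (\<lambda>z. dist (f z / z) c < norm c / 2) at_infinity"
    using tendstoD[OF assms(1), of "norm c / 2"] assms(2) by simp
  then obtain b where b: "\<And>z. b \<le> norm z \<Longrightarrow> dist (f z / z) c < norm c / 2"
    unfolding eventually_at_infinity by blast
  have "norm c / 2 * norm z \<le> norm (f z)" if "max b 1 \<le> norm z" for z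
  proof -
    have "norm c \<le> norm (f z / z) + dist (f z / z) c"
      by (metis dist_commute dist_norm norm_triangle_sub)
    then have "norm c / 2 \<le> norm (f z / z)"
      using b[of z] that by simp
    then have "norm c / 2 * norm z \<le> norm (f z / z) * norm z"
      by (rule mult_right_mono) simp
    also have "\<dots> = norm (f z)"
      using that by (auto simp: norm_divide)
    finally show ?thesis .
  qed
  then show ?thesis using that by blast
qed

lemma closure_image_diff_subset_impressions:
  fixes \<Psi> :: "complex \<Rightarrow> complex"
  assumes cont: "continuous_on {z. 1 < norm z} \<Psi>"
    and lim: "((\<lambda>z. \<Psi> z / z) \<longlongrightarrow> c) at_infinity" and "c \<noteq> 0"
  shows "closure (\<Psi> ` {z. 1 < norm z}) - \<Psi> ` {z. 1 < norm z}
    \<subseteq> (\<Union>w\<in>sphere 0 1. impression \<Psi> w)"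
proof
  fix x assume x: "x \<in> closure (\<Psi> ` {z. 1 < norm z}) - \<Psi> ` {z. 1 < norm z}"
  define E where "E = {z::complex. 1 < norm z}"
  obtain q where q: "\<forall>n. q n \<in> \<Psi> ` E" "q \<longlonglongrightarrow> x"
    using DiffD1[OF x] unfolding closure_sequential E_def by blast
  define z where "z n = inv_into E \<Psi> (q n)" for n
  have zE: "z n \<in> E" and "\<Psi> (z n) = q n" for n
    using q(1) unfolding z_def by (auto intro: inv_into_into f_inv_into_f)
  then have qz: "(\<lambda>n. \<Psi> (z n)) \<longlonglongrightarrow> x"
    using q(2) by simp
  obtain R where R: "\<And>z. R \<le> norm z \<Longrightarrow> norm c / 2 * norm z \<le> norm (\<Psi> z)"
    using norm_ge_linear_at_infinity[OF lim \<open>c \<noteq> 0\<close>] by blast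
  obtain K where K: "\<And>n. norm (\<Psi> (z n)) \<le> K"
    using convergent_imp_Bseq[OF convergentI[OF qz]] unfolding Bseq_def by blast
  have "z n \<in> cball 0 (max R (2 * K / norm c))" for n
  proof (cases "R \<le> norm (z n)")
    case True
    then have "norm c / 2 * norm (z n) \<le> K"
      using R K order_trans by blast
    then have "norm (z n) \<le> 2 * K / norm c"
      using \<open>c \<noteq> 0\<close> by (simp add: field_simps)
    then show ?thesis
      by simp
  qed auto
  then obtain w r where r: "strict_mono r" and zw: "(z \<circ> r) \<longlonglongrightarrow> w"
    using compact_imp_seq_compact[OF compact_cball] unfolding seq_compact_def by metis
  have qzr: "(\<lambda>n. \<Psi> ((z \<circ> r) n)) \<longlonglongrightarrow> x"
    using LIMSEQ_subseq_LIMSEQ[OF qz r] by (simp add: o_def)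
  have "1 \<le> norm w"
    by (rule LIMSEQ_le_const[OF tendsto_norm[OF zw]])
       (use zE in \<open>auto simp: E_def less_imp_le\<close>)
  moreover have "w \<notin> E"
  proof
    assume "w \<in> E"
    then have "(\<lambda>n. \<Psi> ((z \<circ> r) n)) \<longlonglongrightarrow> \<Psi> w"
      using cont zE unfolding E_def by (intro continuous_on_tendsto_compose[OF _ zw]) auto
    then have "x = \<Psi> w"
      using qzr LIMSEQ_unique by blast
    then show False
      using x \<open>w \<in> E\<close> unfolding E_def by auto
  qed
  ultimately have "w \<in> sphere 0 1"
    by (simp add: E_def)
  moreover have "x \<in> impression \<Psi> w"
    unfolding impression_def using zE zw qzr by (intro CollectI exI[of _ "z \<circ> r"]) (auto simp: E_def)
  ultimately show "x \<in> (\<Union>w\<in>sphere 0 1. impression \<Psi> w)"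
    by blast
qed

lemma frontier_outside_eq_impressions:
  assumes "exterior_riemann_map Q \<Psi>" and "closed Q"
  shows "frontier (outside Q) = (\<Union>w\<in>sphere 0 1. impression \<Psi> w)"
proof -
  obtain c where holo: "\<Psi> holomorphic_on {z. 1 < norm z}"
    and img: "\<Psi> ` {z. 1 < norm z} = outside Q" and inj: "inj_on \<Psi> {z. 1 < norm z}"
    and "0 < c" and lim: "((\<lambda>z. \<Psi> z / z) \<longlongrightarrow> complex_of_real c) at_infinity"
    using assms(1) by (auto simp: exterior_riemann_map_def bij_betw_def)
  have "frontier (outside Q) = closure (\<Psi> ` {z. 1 < norm z}) - \<Psi> ` {z. 1 < norm z}"
    using \<open>closed Q\<close> by (simp add: img frontier_def interior_open open_outside)
  also have "\<dots> = (\<Union>w\<in>sphere 0 1. impression \<Psi> w)"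
  proof
    show "closure (\<Psi> ` {z. 1 < norm z}) - \<Psi> ` {z. 1 < norm z}
      \<subseteq> (\<Union>w\<in>sphere 0 1. impression \<Psi> w)"
      using \<open>0 < c\<close> by (intro closure_image_diff_subset_impressions[OF
          holomorphic_on_imp_continuous_on[OF holo] lim]) auto
    show "(\<Union>w\<in>sphere 0 1. impression \<Psi> w)
      \<subseteq> closure (\<Psi> ` {z. 1 < norm z}) - \<Psi> ` {z. 1 < norm z}"
      using impression_subset_closure_image impression_disjoint_image[OF holo inj] by fastforce
  qed
  finally show ?thesis .
qed

lemma continuous_on_impression_value:
  fixes m :: "complex \<Rightarrow> 'b::topological_space"
  assumes "compact K" and contm: "continuous_on K m"
    and impK: "\<And>w. w \<in> S \<Longrightarrow> impression \<Psi> w \<subseteq> K"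
    and \<Phi>: "\<And>w. w \<in> S \<Longrightarrow> m ` impression \<Psi> w = {\<Phi> w}"
  shows "continuous_on S \<Phi>"
  unfolding continuous_on_eq_continuous_within
proof (intro ballI continuous_within_sequentiallyI)
  fix w u assume w: "w \<in> S" and u: "u \<longlonglongrightarrow> w" "\<forall>n. u n \<in> S"
  show "(\<lambda>n. \<Phi> (u n)) \<longlonglongrightarrow> \<Phi> w"
  proof (rule topological_tendstoI, rule ccontr)
    fix U assume U: "open U" "\<Phi> w \<in> U" "\<not> eventually (\<lambda>n. \<Phi> (u n) \<in> U) sequentially"
    have "infinite {n. \<Phi> (u n) \<notin> U}"
      using U(3) unfolding cofinite_eq_sequentially[symmetric] eventually_cofinite by simp
    then obtain r :: "nat \<Rightarrow> nat" where r: "strict_mono r" "\<And>n. \<Phi> (u (r n)) \<notin> U"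
      using infinite_enumerate by blast
    define L where "L n = (SOME L. L \<in> impression \<Psi> (u (r n)))" for n
    have L: "L n \<in> impression \<Psi> (u (r n))" for n
      unfolding L_def using \<Phi> u(2) by (metis image_empty insert_not_empty some_in_eq)
    have \<Phi>L: "\<Phi> (u (r n)) = m (L n)" for n
      using \<Phi>[of "u (r n)"] L[of n] u(2) by (metis imageI singletonD)
    have LK: "L n \<in> K" for n
      using L impK u(2) by blast
    then obtain L0 s where s: "L0 \<in> K" "strict_mono s" "(L \<circ> s) \<longlonglongrightarrow> L0"
      using compact_imp_seq_compact[OF \<open>compact K\<close>] unfolding seq_compact_def by metis
    have "L0 \<in> impression \<Psi> w"
      by (rule impression_limit[of "L \<circ> s" \<Psi> "u \<circ> r \<circ> s"])
         (use L s LIMSEQ_subseq_LIMSEQ[OF LIMSEQ_subseq_LIMSEQ[OF u(1) r(1)] s(2)] in auto)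
    then have "\<Phi> w = m L0"
      using \<Phi>[OF w] by (metis imageI singletonD)
    moreover have "(\<lambda>n. m ((L \<circ> s) n)) \<longlonglongrightarrow> m L0"
      by (intro continuous_on_tendsto_compose[OF contm s(3) s(1)]) (simp add: LK)
    ultimately obtain n where "m ((L \<circ> s) n) \<in> U"
      using U(1,2) topological_tendstoD eventually_happens'[OF sequentially_bot] by metis
    then show False
      using r(2) \<Phi>L by simp
  qed
qed

theorem lemma3p5:
  fixes Q :: "complex set" and \<Psi> :: "complex \<Rightarrow> complex"
    and m :: "complex \<Rightarrow> 'b::t2_space"
  assumes "continuum Q" and "unshielded Q"
    and "exterior_riemann_map Q \<Psi>"
    and "monotone_map Q m" and "m ` Q = UNIV"
    and "\<forall>w\<in>sphere 0 1. \<exists>y. m ` impression \<Psi> w = {y}"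
  shows "locally_connected_space (euclidean :: 'b topology)
    \<and> (\<forall>w\<in>sphere 0 1. impression \<Psi> w \<subseteq> Q)
    \<and> continuous_on (sphere 0 1) (\<lambda>w. THE y. m ` impression \<Psi> w = {y})
    \<and> (\<lambda>w. THE y. m ` impression \<Psi> w = {y}) ` sphere 0 1 = UNIV"
proof -
  define \<Phi> where "\<Phi> = (\<lambda>w. THE y. m ` impression \<Psi> w = {y})"
  have \<Phi>: "m ` impression \<Psi> w = {\<Phi> w}" if w: "w \<in> sphere 0 1" for w
  proof -
    obtain y where y: "m ` impression \<Psi> w = {y}"
      using assms(6) w by blast
    then have "\<Phi> w = y"
      unfolding \<Phi>_def by (rule the_equality) (use y in auto)
    then show ?thesis
      using y by simp
  qed
  have "compact Q" and contm: "continuous_on Q m"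
    using assms(1,4) by (auto simp: continuum_def monotone_map_def)
  have "Q = frontier (outside Q)"
    using assms(2) unfolding unshielded_def .
  also have "\<dots> = (\<Union>w\<in>sphere 0 1. impression \<Psi> w)"
    using frontier_outside_eq_impressions assms(3) \<open>compact Q\<close> compact_imp_closed by blast
  finally have Q: "Q = (\<Union>w\<in>sphere 0 1. impression \<Psi> w)" .
  then have impQ: "\<forall>w\<in>sphere 0 1. impression \<Psi> w \<subseteq> Q"
    by blast
  have cont: "continuous_on (sphere 0 1) \<Phi>"
    using continuous_on_impression_value[OF \<open>compact Q\<close> contm] impQ \<Phi> by blast
  have surj: "\<Phi> ` sphere 0 1 = UNIV"
  proof (intro set_eqI iffI)
    fix y :: 'b
    obtain x where "x \<in> Q" "m x = y"
      using assms(5) by (metis UNIV_I imageE)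
    moreover obtain w where "w \<in> sphere 0 1" "x \<in> impression \<Psi> w"
      using Q \<open>x \<in> Q\<close> by blast
    ultimately show "y \<in> \<Phi> ` sphere 0 1"
      using \<Phi> by (metis imageI singletonD)
  qed simp
  have "locally_connected_space (euclidean :: 'b topology)"
    by (rule locally_connected_space_continuous_image[OF compact_sphere locally_connected_sphere
        cont surj])
  then show ?thesis
    using impQ cont surj unfolding \<Phi>_def by blast
qed

end
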